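(* Let $r>\tfrac32$, $c_0\in\mathcal I^r(\mathbb{S}^1,\mathbb{R}^d)$ and $\rho>0$. Then for all $c_1,c_2\in B_{G^r}(c_0,\rho)$, $$\|c_2-c_1\|_{H^r}\le\alpha(r,c_0,4\rho)\,\operatorname{dist}_{G^r}(c_1,c_2),$$ where $\alpha(r,c_0,\rho')>0$ denotes a constant such that $\alpha^{-1}\|h\|_{H^r}\le\|h\|_{G^r_c}\le\alpha\|h\|_{H^r}$ for all $c\in B_{G^r}(c_0,\rho')$ and all $h\in H^r(\mathbb{S}^1,\mathbb{R}^d)$ (such a constant exists for every $\rho'>0$).
   Context: $\mathbb{S}^1=\mathbb{R}/\mathbb{Z}$; $\|f\|_{H^q}^2=\sum_n(1+n^2)^q|\hat f(n)|^2$, $\|f\|_{\dot H^q}^2=\sum_n|n|^{2q}|\hat f(n)|^2$. For $r>\tfrac32$, $\mathcal I^r(\mathbb{S}^1,\mathbb{R}^d)=\{c\in H^r:c_\theta\neq0\text{ everywhere}\}$ with $T_c\mathcal I^r=H^r$. For $c$: $l_c=\int_0^1|c_\theta|d\theta$, $ds=|c_\theta|d\theta$, $\psi_c(\theta)=\frac1{l_c}\int_0^\theta|c_\theta|$. The metric $G^r$: $\|h\|_{G^r_c}^2=\int|h|^2ds+l_c^{1-2r}\|h\circ\psi_c^{-1}\|_{\dot H^r}^2$; $\operatorname{dist}_{G^r}$ is its geodesic distance on $\mathcal I^r$ (infimum of lengths of piecewise $C^1$ paths) and $B_{G^r}(c_0,\rho)=\{c:\operatorname{dist}_{G^r}(c,c_0)<\rho\}$.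 *)

theory Defs
  imports "HOL-Analysis.Analysis"
begin

text \<open>Curves on S^1 = R/Z are modelled as 1-periodic functions real => 'a,
  where 'a is a Euclidean space (R^d).  Fourier coefficients are taken over [0,1].\<close>

definition fcoef :: "(real \<Rightarrow> real) \<Rightarrow> int \<Rightarrow> complex" where
  "fcoef g n = integral {0..1} (\<lambda>x. complex_of_real (g x) * cis (- 2 * pi * real_of_int n * x))"

definition fc_sq :: "(real \<Rightarrow> 'a::euclidean_space) \<Rightarrow> int \<Rightarrow> real" where
  "fc_sq f n = (\<Sum>b\<in>Basis. (cmod (fcoef (\<lambda>x. f x \<bullet> b) n))\<^sup>2)"

definition Hr_sq :: "real \<Rightarrow> (real \<Rightarrow> 'a::euclidean_space) \<Rightarrow> real" where
  "Hr_sq q f = infsum (\<lambda>n::int. (1 + (real_of_int n)\<^sup>2) powr q * fc_sq f n) UNIV"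

definition Hr_norm :: "real \<Rightarrow> (real \<Rightarrow> 'a::euclidean_space) \<Rightarrow> real" where
  "Hr_norm q f = sqrt (Hr_sq q f)"

definition Hdot_sq :: "real \<Rightarrow> (real \<Rightarrow> 'a::euclidean_space) \<Rightarrow> real" where
  "Hdot_sq q f = infsum (\<lambda>n::int. (real_of_int \<bar>n\<bar>) powr (2 * q) * fc_sq f n) UNIV"

definition in_H :: "real \<Rightarrow> (real \<Rightarrow> 'a::euclidean_space) \<Rightarrow> bool" where
  "in_H q f \<longleftrightarrow> (\<forall>x. f (x + 1) = f x) \<and> f absolutely_integrable_on {0..1}
     \<and> (\<lambda>x. (norm (f x))\<^sup>2) integrable_on {0..1}
     \<and> (\<lambda>n::int. (1 + (real_of_int n)\<^sup>2) powr q * fc_sq f n) summable_on UNIV"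

definition Imm :: "real \<Rightarrow> (real \<Rightarrow> 'a::euclidean_space) \<Rightarrow> bool" where
  "Imm r c \<longleftrightarrow> in_H r c \<and> c C1_differentiable_on UNIV
     \<and> (\<forall>\<theta>. vector_derivative c (at \<theta>) \<noteq> 0)"

definition len :: "(real \<Rightarrow> 'a::euclidean_space) \<Rightarrow> real" where
  "len c = integral {0..1} (\<lambda>\<theta>. norm (vector_derivative c (at \<theta>)))"

definition psi :: "(real \<Rightarrow> 'a::euclidean_space) \<Rightarrow> real \<Rightarrow> real" where
  "psi c \<theta> = integral {0..\<theta>} (\<lambda>t. norm (vector_derivative c (at t))) / len c"

definition G_sq :: "real \<Rightarrow> (real \<Rightarrow> 'a::euclidean_space) \<Rightarrow> (real \<Rightarrow> 'a) \<Rightarrow> real" where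
  "G_sq r c h = integral {0..1} (\<lambda>\<theta>. (norm (h \<theta>))\<^sup>2 * norm (vector_derivative c (at \<theta>)))
     + len c powr (1 - 2 * r) * Hdot_sq r (h \<circ> inv_into {0..1} (psi c))"

definition G_norm :: "real \<Rightarrow> (real \<Rightarrow> 'a::euclidean_space) \<Rightarrow> (real \<Rightarrow> 'a) \<Rightarrow> real" where
  "G_norm r c h = sqrt (G_sq r c h)"

definition H_has_deriv :: "real \<Rightarrow> (real \<Rightarrow> real \<Rightarrow> 'a::euclidean_space) \<Rightarrow> (real \<Rightarrow> 'a)
    \<Rightarrow> real \<Rightarrow> real set \<Rightarrow> bool" where
  "H_has_deriv r \<gamma> D t S \<longleftrightarrow>
     ((\<lambda>s. Hr_norm r (\<lambda>\<theta>. (1 / (s - t)) *\<^sub>R (\<gamma> s \<theta> - \<gamma> t \<theta>) - D \<theta>)) \<longlongrightarrow> 0) (at t within S)"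

definition H_continuous_on :: "real \<Rightarrow> real set \<Rightarrow> (real \<Rightarrow> real \<Rightarrow> 'a::euclidean_space) \<Rightarrow> bool" where
  "H_continuous_on r S D \<longleftrightarrow>
     (\<forall>t\<in>S. ((\<lambda>s. Hr_norm r (\<lambda>\<theta>. D s \<theta> - D t \<theta>)) \<longlongrightarrow> 0) (at t within S))"

definition pw_C1_path :: "real \<Rightarrow> (real \<Rightarrow> real \<Rightarrow> 'a::euclidean_space) \<Rightarrow> (real \<Rightarrow> real \<Rightarrow> 'a) \<Rightarrow> bool" where
  "pw_C1_path r \<gamma> D \<longleftrightarrow> (\<forall>t\<in>{0..1}. Imm r (\<gamma> t)) \<and>
     (\<exists>K. finite K \<and> {0, 1} \<subseteq> K \<and> K \<subseteq> {0..1} \<and>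
        (\<forall>a\<in>K. \<forall>b\<in>K. a < b \<and> {a<..<b} \<inter> K = {} \<longrightarrow>
           (\<exists>D'. (\<forall>t\<in>{a..b}. in_H r (D' t) \<and> H_has_deriv r \<gamma> (D' t) t {a..b})
                 \<and> H_continuous_on r {a..b} D'
                 \<and> (\<forall>t\<in>{a<..<b}. D t = D' t))))"

definition path_len :: "real \<Rightarrow> (real \<Rightarrow> real \<Rightarrow> 'a::euclidean_space) \<Rightarrow> (real \<Rightarrow> real \<Rightarrow> 'a) \<Rightarrow> real" where
  "path_len r \<gamma> D = integral {0..1} (\<lambda>t. G_norm r (\<gamma> t) (D t))"

text \<open>geodesic distance (infimum of lengths of piecewise C^1 paths; +\<infinity> if there is none)\<close>
definition distG :: "real \<Rightarrow> (real \<Rightarrow> 'a::euclidean_space) \<Rightarrow> (real \<Rightarrow> 'a) \<Rightarrow> ereal" where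
  "distG r c1 c2 = Inf {ereal (path_len r \<gamma> D) | \<gamma> D. pw_C1_path r \<gamma> D \<and> \<gamma> 0 = c1 \<and> \<gamma> 1 = c2
       \<and> (\<lambda>t. G_norm r (\<gamma> t) (D t)) integrable_on {0..1}}"

definition ballG :: "real \<Rightarrow> (real \<Rightarrow> 'a::euclidean_space) \<Rightarrow> real \<Rightarrow> (real \<Rightarrow> 'a) set" where
  "ballG r c0 \<rho> = {c. Imm r c \<and> distG r c c0 < ereal \<rho>}"

end

theory Submission
  imports Defs
begin

text \<open>Cut off at a finite set \<open>F\<close> of frequencies, the \<open>H\<^sup>r\<close> norm becomes a seminorm
  \<open>|_|\<^sub>F\<close> coming from an inner product \<open>\<langle>_, _\<rangle>\<^sub>F\<close>, with no summability issues. Along a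
  piecewise \<open>C\<^sup>1\<close> path \<open>\<gamma>\<close> the function \<open>t \<mapsto> \<langle>v, \<gamma> t\<rangle>\<^sub>F\<close> has derivative
  \<open>\<langle>v, \<gamma>' t\<rangle>\<^sub>F \<le> |v|\<^sub>F \<parallel>\<gamma>' t\<parallel>\<^sub>H\<^sub>r\<close>, which is at most \<open>\<alpha> |v|\<^sub>F \<parallel>\<gamma>' t\<parallel>\<^sub>G\<close> wherever the two metrics
  are comparable; integrating with \<open>v = \<gamma> 1 - \<gamma> 0\<close> gives \<open>|\<gamma> 1 - \<gamma> 0|\<^sub>F \<le> \<alpha> L(\<gamma>)\<close>, and letting
  \<open>F\<close> grow the same bound for the \<open>H\<^sup>r\<close> norm.

  For \<open>c\<^sub>1, c\<^sub>2 \<in> B(c\<^sub>0, \<rho>)\<close> pick paths \<open>\<beta>\<^sub>i\<close> from \<open>c\<^sub>i\<close> to \<open>c\<^sub>0\<close> of length \<open>< \<rho>\<close>. A path \<open>\<gamma>\<close> from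
  \<open>c\<^sub>1\<close> to \<open>c\<^sub>2\<close> of length \<open>< 3\<rho>\<close> stays in \<open>B(c\<^sub>0, 4\<rho>)\<close>, since the rest of \<open>\<gamma>\<close> followed by
  \<open>\<beta>\<^sub>2\<close> joins any of its points to \<open>c\<^sub>0\<close>, so the estimate above applies. A longer path loses
  against the triangle inequality through \<open>c\<^sub>0\<close>, which costs at most \<open>\<alpha>(L(\<beta>\<^sub>1) + L(\<beta>\<^sub>2)) < 2\<alpha>\<rho>\<close>.\<close>

definition sobolev_weight :: "real \<Rightarrow> int \<Rightarrow> real" where
  "sobolev_weight r n = (1 + (real_of_int n)\<^sup>2) powr r"

lemma sobolev_weight_pos: "sobolev_weight r n > 0"
proof -
  have "1 + (real_of_int n)\<^sup>2 > 0" by (simp add: add_pos_nonneg)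
  then show ?thesis unfolding sobolev_weight_def by simp
qed

definition fcoef_comp :: "(real \<Rightarrow> 'a::euclidean_space) \<Rightarrow> int \<Rightarrow> 'a \<Rightarrow> complex" where
  "fcoef_comp f n b = fcoef (\<lambda>x. f x \<bullet> b) n"

lemma fcoef_has_integral:
  assumes "g absolutely_integrable_on {0..1}"
  shows "((\<lambda>x. complex_of_real (g x) * cis (- 2 * pi * real_of_int n * x)) has_integral fcoef g n) {0..1}"
proof -
  let ?e = "\<lambda>x. cis (- 2 * pi * real_of_int n * x)"
  have "?e \<in> borel_measurable (lebesgue_on {0..1})"
    by (intro continuous_imp_measurable_on_sets_lebesgue continuous_intros) auto
  moreover have "bounded (?e ` {0..1})"
    unfolding bounded_iff by (intro exI[of _ 1]) auto
  moreover have "(\<lambda>x. complex_of_real (g x)) absolutely_integrable_on {0..1}"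
    using absolutely_integrable_linear[OF assms bounded_linear_of_real] by (simp add: o_def)
  ultimately have "(\<lambda>x. ?e x * complex_of_real (g x)) absolutely_integrable_on {0..1}"
    by (intro absolutely_integrable_bounded_measurable_product[OF bilinear_times]) auto
  then show ?thesis
    unfolding fcoef_def by (simp add: mult.commute absolutely_integrable_on_def has_integral_integral)
qed

lemma fcoef_add:
  assumes "g absolutely_integrable_on {0..1}" "h absolutely_integrable_on {0..1}"
  shows "fcoef (\<lambda>x. g x + h x) n = fcoef g n + fcoef h n"
  unfolding fcoef_def[of "\<lambda>x. g x + h x"]
  by (rule integral_unique)
     (use has_integral_add[OF fcoef_has_integral[OF assms(1)] fcoef_has_integral[OF assms(2)]]
      in \<open>simp add: distrib_right\<close>)

lemma fcoef_diff:
  assumes "g absolutely_integrable_on {0..1}" "h absolutely_integrable_on {0..1}"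
  shows "fcoef (\<lambda>x. g x - h x) n = fcoef g n - fcoef h n"
  unfolding fcoef_def[of "\<lambda>x. g x - h x"]
  by (rule integral_unique)
     (use has_integral_diff[OF fcoef_has_integral[OF assms(1)] fcoef_has_integral[OF assms(2)]]
      in \<open>simp add: left_diff_distrib\<close>)

lemma fcoef_scale: "fcoef (\<lambda>x. c * g x) n = of_real c * fcoef g n"
  unfolding fcoef_def by (simp add: mult.assoc flip: integral_mult_right)

lemma fcoef_comp_add:
  assumes "f absolutely_integrable_on {0..1}" "g absolutely_integrable_on {0..1}"
  shows "fcoef_comp (\<lambda>x. f x + g x) n b = fcoef_comp f n b + fcoef_comp g n b"
  unfolding fcoef_comp_def inner_add_left
  by (intro fcoef_add absolutely_integrable_component assms)

lemma fcoef_comp_diff: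
  assumes "f absolutely_integrable_on {0..1}" "g absolutely_integrable_on {0..1}"
  shows "fcoef_comp (\<lambda>x. f x - g x) n b = fcoef_comp f n b - fcoef_comp g n b"
  unfolding fcoef_comp_def inner_diff_left
  by (intro fcoef_diff absolutely_integrable_component assms)

lemma fcoef_comp_scale: "fcoef_comp (\<lambda>x. c *\<^sub>R f x) n b = of_real c * fcoef_comp f n b"
  unfolding fcoef_comp_def by (simp add: fcoef_scale)

lemma fc_sq_eq: "fc_sq f n = (\<Sum>b\<in>Basis. (cmod (fcoef_comp f n b))\<^sup>2)"
  unfolding fc_sq_def fcoef_comp_def ..

lemma fc_sq_nonneg: "fc_sq f n \<ge> 0"
  unfolding fc_sq_def by (simp add: sum_nonneg)

lemma fc_sq_zero: "fc_sq (\<lambda>x. 0::'a::euclidean_space) n = 0"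
  unfolding fc_sq_def fcoef_def by simp

lemma fc_sq_scale: "fc_sq (\<lambda>x. c *\<^sub>R f x) n = c\<^sup>2 * fc_sq f n"
  unfolding fc_sq_eq fcoef_comp_scale by (simp add: norm_mult power_mult_distrib sum_distrib_left)

lemma fc_sq_diff_le:
  assumes "f absolutely_integrable_on {0..1}" "g absolutely_integrable_on {0..1}"
  shows "fc_sq (\<lambda>x. f x - g x) n \<le> 2 * fc_sq f n + 2 * fc_sq g n"
proof -
  have "(cmod (z - w))\<^sup>2 \<le> 2 * (cmod z)\<^sup>2 + 2 * (cmod w)\<^sup>2" for z w :: complex
  proof -
    have "(cmod (z - w))\<^sup>2 \<le> (cmod z + cmod w)\<^sup>2"
      by (intro power_mono norm_triangle_ineq4) simp
    also have "\<dots> \<le> 2 * (cmod z)\<^sup>2 + 2 * (cmod w)\<^sup>2"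
      using sum_squares_bound[of "cmod z" "cmod w"] by (simp add: power2_sum)
    finally show ?thesis .
  qed
  then show ?thesis
    unfolding fc_sq_eq fcoef_comp_diff[OF assms] sum_distrib_left sum.distrib[symmetric]
    by (intro sum_mono)
qed

subsection \<open>Truncated Sobolev norms\<close>

definition sobolev_summable :: "real \<Rightarrow> (real \<Rightarrow> 'a::euclidean_space) \<Rightarrow> bool" where
  "sobolev_summable r f \<longleftrightarrow> (\<lambda>n. sobolev_weight r n * fc_sq f n) summable_on UNIV"

lemma in_H_iff:
  "in_H r f \<longleftrightarrow> (\<forall>x. f (x + 1) = f x) \<and> f absolutely_integrable_on {0..1}
     \<and> (\<lambda>x. (norm (f x))\<^sup>2) integrable_on {0..1} \<and> sobolev_summable r f"
  unfolding in_H_def sobolev_summable_def sobolev_weight_def ..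

lemma in_H_imp_absolutely_integrable: "in_H r f \<Longrightarrow> f absolutely_integrable_on {0..1}"
  unfolding in_H_iff by simp

lemma in_H_imp_sobolev_summable: "in_H r f \<Longrightarrow> sobolev_summable r f"
  unfolding in_H_iff by simp

lemma Imm_imp_in_H: "Imm r c \<Longrightarrow> in_H r c"
  unfolding Imm_def by simp

lemma weighted_fc_sq_nonneg: "0 \<le> sobolev_weight r n * fc_sq f n"
  using sobolev_weight_pos[of r n] fc_sq_nonneg[of f n] by simp

lemma sobolev_summable_diff:
  assumes "f absolutely_integrable_on {0..1}" "g absolutely_integrable_on {0..1}"
    and "sobolev_summable r f" "sobolev_summable r g"
  shows "sobolev_summable r (\<lambda>x. f x - g x)"
  unfolding sobolev_summable_def
proof (rule summable_on_comparison_test)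
  show "(\<lambda>n. 2 * (sobolev_weight r n * fc_sq f n) + 2 * (sobolev_weight r n * fc_sq g n))
      summable_on UNIV"
    using assms(3,4) unfolding sobolev_summable_def
    by (intro summable_on_add summable_on_cmult_right)
  fix n
  show "sobolev_weight r n * fc_sq (\<lambda>x. f x - g x) n
      \<le> 2 * (sobolev_weight r n * fc_sq f n) + 2 * (sobolev_weight r n * fc_sq g n)"
    using mult_left_mono[OF fc_sq_diff_le[OF assms(1,2)],
        of "sobolev_weight r n" n] sobolev_weight_pos[of r n]
    by (simp add: algebra_simps)
qed (rule weighted_fc_sq_nonneg)

lemma sobolev_summable_scale: "sobolev_summable r f \<Longrightarrow> sobolev_summable r (\<lambda>x. c *\<^sub>R f x)"
  unfolding sobolev_summable_def fc_sq_scale mult.left_commute[of _ "c\<^sup>2"]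
  by (rule summable_on_cmult_right)

lemma in_H_scale:
  assumes "in_H r f"
  shows "in_H r (\<lambda>x. c *\<^sub>R f x)"
proof -
  have "(\<lambda>x. c\<^sup>2 * (norm (f x))\<^sup>2) integrable_on {0..1}"
    using assms unfolding in_H_iff by (intro integrable_on_mult_right) auto
  moreover have "(\<lambda>n. c\<^sup>2 * (sobolev_weight r n * fc_sq f n)) summable_on UNIV"
    using assms unfolding in_H_iff sobolev_summable_def by (intro summable_on_cmult_right) auto
  ultimately show ?thesis
    using assms unfolding in_H_iff sobolev_summable_def fc_sq_scale
    by (auto simp: power_mult_distrib mult.left_commute[of "c\<^sup>2"]
        intro: absolutely_integrable_scaleR_left)
qed

lemma in_H_zero: "in_H r (\<lambda>x. 0::'a::euclidean_space)"
  unfolding in_H_iff sobolev_summable_def by (simp add: fc_sq_zero integrable_0)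

lemma Hr_norm_eq: "Hr_norm r f = sqrt (\<Sum>\<^sub>\<infinity>n. sobolev_weight r n * fc_sq f n)"
  unfolding Hr_norm_def Hr_sq_def sobolev_weight_def ..

lemma Hr_norm_scale: "Hr_norm r (\<lambda>x. c *\<^sub>R f x) = \<bar>c\<bar> * Hr_norm r f"
  unfolding Hr_norm_eq fc_sq_scale
  by (simp add: mult.left_commute[of _ "c\<^sup>2"] infsum_cmult_right' real_sqrt_mult)

lemma Hr_norm_nonneg: "Hr_norm r f \<ge> 0"
  unfolding Hr_norm_eq by (simp add: infsum_nonneg weighted_fc_sq_nonneg)

lemma Hr_norm_zero: "Hr_norm r (\<lambda>x. 0::'a::euclidean_space) = 0"
  unfolding Hr_norm_eq fc_sq_zero by simp

definition trunc_norm :: "real \<Rightarrow> int set \<Rightarrow> (real \<Rightarrow> 'a::euclidean_space) \<Rightarrow> real" where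
  "trunc_norm r F f = sqrt (\<Sum>n\<in>F. sobolev_weight r n * fc_sq f n)"

definition trunc_inner ::
    "real \<Rightarrow> int set \<Rightarrow> (real \<Rightarrow> 'a::euclidean_space) \<Rightarrow> (real \<Rightarrow> 'a) \<Rightarrow> real" where
  "trunc_inner r F f g =
     (\<Sum>n\<in>F. \<Sum>b\<in>Basis. sobolev_weight r n * Re (cnj (fcoef_comp f n b) * fcoef_comp g n b))"

lemma trunc_norm_nonneg: "trunc_norm r F f \<ge> 0"
  unfolding trunc_norm_def by (simp add: sum_nonneg weighted_fc_sq_nonneg)

lemma trunc_norm_eq_L2_set:
  "trunc_norm r F f =
     L2_set (\<lambda>(n, b). sqrt (sobolev_weight r n) * cmod (fcoef_comp f n b)) (F \<times> Basis)"
proof -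
  have "(\<Sum>n\<in>F. sobolev_weight r n * fc_sq f n)
      = (\<Sum>n\<in>F. \<Sum>b\<in>Basis. (sqrt (sobolev_weight r n) * cmod (fcoef_comp f n b))\<^sup>2)"
    unfolding fc_sq_eq sum_distrib_left
    using sobolev_weight_pos[of r] by (simp add: power_mult_distrib less_imp_le)
  then show ?thesis
    unfolding trunc_norm_def L2_set_def by (simp add: sum.cartesian_product case_prod_beta)
qed

lemma trunc_norm_triangle:
  assumes "f absolutely_integrable_on {0..1}" "g absolutely_integrable_on {0..1}"
  shows "trunc_norm r F (\<lambda>x. f x + g x) \<le> trunc_norm r F f + trunc_norm r F g"
proof -
  let ?w = "\<lambda>n. sqrt (sobolev_weight r n)"
  have "trunc_norm r F (\<lambda>x. f x + g x) \<le> L2_set (\<lambda>i.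
      (\<lambda>(n, b). ?w n * cmod (fcoef_comp f n b)) i + (\<lambda>(n, b). ?w n * cmod (fcoef_comp g n b)) i)
      (F \<times> Basis)"
    unfolding trunc_norm_eq_L2_set
    using sobolev_weight_pos[of r]
    by (intro L2_set_mono)
       (auto simp: fcoef_comp_add[OF assms] distrib_left[symmetric] less_imp_le
             intro!: mult_left_mono norm_triangle_ineq)
  also have "\<dots> \<le> trunc_norm r F f + trunc_norm r F g"
    unfolding trunc_norm_eq_L2_set by (rule L2_set_triangle_ineq)
  finally show ?thesis .
qed

lemma trunc_norm_le_Hr_norm:
  assumes "sobolev_summable r f" "finite F"
  shows "trunc_norm r F f \<le> Hr_norm r f"
  unfolding trunc_norm_def Hr_norm_eq
  using assms weighted_fc_sq_nonneg unfolding sobolev_summable_def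
  by (intro real_sqrt_le_mono finite_sum_le_infsum) auto

lemma Hr_norm_le_if_trunc_norm_le:
  assumes "sobolev_summable r f" "0 \<le> B" "\<And>F. finite F \<Longrightarrow> trunc_norm r F f \<le> B"
  shows "Hr_norm r f \<le> B"
proof -
  have "(\<Sum>\<^sub>\<infinity>n. sobolev_weight r n * fc_sq f n) \<le> B\<^sup>2"
  proof (rule infsum_le_finite_sums)
    fix F :: "int set" assume "finite F"
    have "0 \<le> (\<Sum>n\<in>F. sobolev_weight r n * fc_sq f n)"
      by (simp add: sum_nonneg weighted_fc_sq_nonneg)
    with assms(3)[OF \<open>finite F\<close>] show "(\<Sum>n\<in>F. sobolev_weight r n * fc_sq f n) \<le> B\<^sup>2"
      unfolding trunc_norm_def using real_sqrt_le_iff by fastforce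
  qed (use assms(1) sobolev_summable_def in auto)
  then show ?thesis
    unfolding Hr_norm_eq using assms(2) real_sqrt_le_mono by fastforce
qed

lemma Hr_norm_diff_triangle:
  assumes "in_H r f" "in_H r g" "in_H r h"
  shows "Hr_norm r (\<lambda>x. f x - h x) \<le> Hr_norm r (\<lambda>x. f x - g x) + Hr_norm r (\<lambda>x. g x - h x)"
proof (rule Hr_norm_le_if_trunc_norm_le)
  fix F :: "int set" assume F: "finite F"
  note ai = assms[THEN in_H_imp_absolutely_integrable]
  have "trunc_norm r F (\<lambda>x. f x - h x) = trunc_norm r F (\<lambda>x. (f x - g x) + (g x - h x))"
    by simp
  also have "\<dots> \<le> trunc_norm r F (\<lambda>x. f x - g x) + trunc_norm r F (\<lambda>x. g x - h x)"
    using ai by (intro trunc_norm_triangle set_integral_diff(1))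
  also have "\<dots> \<le> Hr_norm r (\<lambda>x. f x - g x) + Hr_norm r (\<lambda>x. g x - h x)"
    using F ai assms[THEN in_H_imp_sobolev_summable]
    by (intro add_mono trunc_norm_le_Hr_norm sobolev_summable_diff)
  finally show "trunc_norm r F (\<lambda>x. f x - h x) \<le> \<dots>" .
next
  show "sobolev_summable r (\<lambda>x. f x - h x)"
    using assms(1,3) by (intro sobolev_summable_diff in_H_imp_absolutely_integrable
        in_H_imp_sobolev_summable)
qed (intro add_nonneg_nonneg Hr_norm_nonneg)

lemma Hr_norm_diff_commute: "Hr_norm r (\<lambda>x. f x - g x) = Hr_norm r (\<lambda>x. g x - f x)"
  using Hr_norm_scale[of r "-1" "\<lambda>x. g x - f x"] by simp

lemma trunc_inner_self: "trunc_inner r F f f = (trunc_norm r F f)\<^sup>2"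
proof -
  have "Re (cnj z * z) = (cmod z)\<^sup>2" for z
    by (metis Re_complex_of_real complex_norm_square mult.commute)
  then show ?thesis
    unfolding trunc_inner_def trunc_norm_def fc_sq_eq sum_distrib_left
    by (simp add: sum_nonneg weighted_fc_sq_nonneg[unfolded fc_sq_eq sum_distrib_left])
qed

lemma trunc_inner_Cauchy_Schwarz: "\<bar>trunc_inner r F f g\<bar> \<le> trunc_norm r F f * trunc_norm r F g"
proof -
  let ?u = "\<lambda>(n, b). sqrt (sobolev_weight r n) * cmod (fcoef_comp f n b)"
  let ?v = "\<lambda>(n, b). sqrt (sobolev_weight r n) * cmod (fcoef_comp g n b)"
  let ?p = "\<lambda>(n, b). sobolev_weight r n * Re (cnj (fcoef_comp f n b) * fcoef_comp g n b)"
  have "\<bar>trunc_inner r F f g\<bar> = \<bar>\<Sum>i\<in>F \<times> Basis. ?p i\<bar>"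
    unfolding trunc_inner_def by (simp add: sum.cartesian_product case_prod_beta)
  also have "\<dots> \<le> (\<Sum>i\<in>F \<times> Basis. \<bar>?u i\<bar> * \<bar>?v i\<bar>)"
  proof (rule order_trans[OF sum_abs sum_mono])
    fix i :: "int \<times> 'a" assume "i \<in> F \<times> Basis"
    obtain n b where i: "i = (n, b)" by force
    have "\<bar>Re (cnj (fcoef_comp f n b) * fcoef_comp g n b)\<bar>
        \<le> cmod (fcoef_comp f n b) * cmod (fcoef_comp g n b)"
      using abs_Re_le_cmod[of "cnj (fcoef_comp f n b) * fcoef_comp g n b"] by (simp add: norm_mult)
    then have "sobolev_weight r n * \<bar>Re (cnj (fcoef_comp f n b) * fcoef_comp g n b)\<bar>
        \<le> sobolev_weight r n * (cmod (fcoef_comp f n b) * cmod (fcoef_comp g n b))"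
      using sobolev_weight_pos[of r n] by (intro mult_left_mono) auto
    also have "\<dots> = sqrt (sobolev_weight r n) * cmod (fcoef_comp f n b)
        * (sqrt (sobolev_weight r n) * cmod (fcoef_comp g n b))"
      using sobolev_weight_pos[of r n] real_sqrt_mult_self[of "sobolev_weight r n"]
      by (metis abs_of_pos mult.assoc mult.left_commute)
    finally have "sobolev_weight r n * \<bar>Re (cnj (fcoef_comp f n b) * fcoef_comp g n b)\<bar>
        \<le> sqrt (sobolev_weight r n) * cmod (fcoef_comp f n b)
          * (sqrt (sobolev_weight r n) * cmod (fcoef_comp g n b))" .
    then show "\<bar>?p i\<bar> \<le> \<bar>?u i\<bar> * \<bar>?v i\<bar>"
      using sobolev_weight_pos[of r n] by (simp add: i abs_mult)
  qed
  also have "\<dots> \<le> L2_set ?u (F \<times> Basis) * L2_set ?v (F \<times> Basis)"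
    by (rule L2_set_mult_ineq)
  finally show ?thesis unfolding trunc_norm_eq_L2_set .
qed

lemma trunc_inner_diff:
  assumes "g absolutely_integrable_on {0..1}" "h absolutely_integrable_on {0..1}"
  shows "trunc_inner r F f (\<lambda>x. g x - h x) = trunc_inner r F f g - trunc_inner r F f h"
  unfolding trunc_inner_def fcoef_comp_diff[OF assms]
  by (simp add: algebra_simps sum_subtractf)

lemma trunc_inner_scale: "trunc_inner r F f (\<lambda>x. c *\<^sub>R g x) = c * trunc_inner r F f g"
  unfolding trunc_inner_def fcoef_comp_scale
  by (simp add: sum_distrib_left algebra_simps)

subsection \<open>The length of a path bounds its Sobolev increment\<close>

lemma trunc_inner_has_real_derivative:
  assumes deriv: "H_has_deriv r \<gamma> D t S" and "t \<in> S"
    and H: "\<And>s. s \<in> S \<Longrightarrow> in_H r (\<gamma> s)" "in_H r D" and "finite F"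
  shows "((\<lambda>s. trunc_inner r F v (\<gamma> s)) has_real_derivative trunc_inner r F v D) (at t within S)"
proof -
  let ?q = "\<lambda>s \<theta>. (1 / (s - t)) *\<^sub>R (\<gamma> s \<theta> - \<gamma> t \<theta>) - D \<theta>"
  have bound: "norm ((trunc_inner r F v (\<gamma> s) - trunc_inner r F v (\<gamma> t)) / (s - t)
      - trunc_inner r F v D) \<le> trunc_norm r F v * Hr_norm r (?q s)" if "s \<in> S" for s
  proof -
    have ai: "\<gamma> s absolutely_integrable_on {0..1}" "\<gamma> t absolutely_integrable_on {0..1}"
        "D absolutely_integrable_on {0..1}"
      using H(1)[OF that] H(1)[OF \<open>t \<in> S\<close>] H(2) by (simp_all add: in_H_imp_absolutely_integrable)
    have sm: "sobolev_summable r (\<gamma> s)" "sobolev_summable r (\<gamma> t)" "sobolev_summable r D"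
      using H(1)[OF that] H(1)[OF \<open>t \<in> S\<close>] H(2) by (simp_all add: in_H_imp_sobolev_summable)
    have ai_diff: "(\<lambda>\<theta>. \<gamma> s \<theta> - \<gamma> t \<theta>) absolutely_integrable_on {0..1}"
      using ai(1,2) by (rule set_integral_diff(1))
    then have ai_quot: "(\<lambda>\<theta>. (1 / (s - t)) *\<^sub>R (\<gamma> s \<theta> - \<gamma> t \<theta>)) absolutely_integrable_on {0..1}"
      by (rule absolutely_integrable_scaleR_left)
    have "(trunc_inner r F v (\<gamma> s) - trunc_inner r F v (\<gamma> t)) / (s - t) - trunc_inner r F v D
        = trunc_inner r F v (?q s)"
      by (simp add: trunc_inner_diff[OF ai_quot ai(3)] trunc_inner_scale trunc_inner_diff[OF ai(1,2)])
    also have "\<bar>\<dots>\<bar> \<le> trunc_norm r F v * trunc_norm r F (?q s)"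
      by (rule trunc_inner_Cauchy_Schwarz)
    also have "\<dots> \<le> trunc_norm r F v * Hr_norm r (?q s)"
      using sobolev_summable_diff[OF ai_quot ai(3) sobolev_summable_scale sm(3)]
        sobolev_summable_diff[OF ai(1,2) sm(1,2)] \<open>finite F\<close>
      by (intro mult_left_mono trunc_norm_le_Hr_norm trunc_norm_nonneg)
    finally show ?thesis by simp
  qed
  have "eventually (\<lambda>s. norm ((trunc_inner r F v (\<gamma> s) - trunc_inner r F v (\<gamma> t)) / (s - t)
      - trunc_inner r F v D) \<le> trunc_norm r F v * Hr_norm r (?q s)) (at t within S)"
    unfolding eventually_at_filter by (intro always_eventually allI impI bound)
  then have "((\<lambda>s. (trunc_inner r F v (\<gamma> s) - trunc_inner r F v (\<gamma> t)) / (s - t)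
      - trunc_inner r F v D) \<longlongrightarrow> 0) (at t within S)"
    using deriv unfolding H_has_deriv_def by (rule Lim_null_comparison[OF _ tendsto_mult_right_zero])
  then show ?thesis
    unfolding has_field_derivative_iff by (rule LIM_zero_cancel)
qed

definition consecutive_in :: "real set \<Rightarrow> real \<Rightarrow> real \<Rightarrow> bool" where
  "consecutive_in K a b \<longleftrightarrow> a \<in> K \<and> b \<in> K \<and> a < b \<and> {a<..<b} \<inter> K = {}"

definition H_C1_on ::
    "real \<Rightarrow> (real \<Rightarrow> real \<Rightarrow> 'a::euclidean_space) \<Rightarrow> (real \<Rightarrow> real \<Rightarrow> 'a) \<Rightarrow> real \<Rightarrow> real \<Rightarrow> bool"
  where "H_C1_on r \<gamma> D a b \<longleftrightarrow>
    (\<forall>t\<in>{a..b}. in_H r (D t) \<and> H_has_deriv r \<gamma> (D t) t {a..b}) \<and> H_continuous_on r {a..b} D"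

definition pw_C1_path_on ::
    "real \<Rightarrow> real \<Rightarrow> real \<Rightarrow> (real \<Rightarrow> real \<Rightarrow> 'a::euclidean_space) \<Rightarrow> (real \<Rightarrow> real \<Rightarrow> 'a) \<Rightarrow> bool"
  where "pw_C1_path_on r u v \<gamma> D \<longleftrightarrow> (\<forall>t\<in>{u..v}. Imm r (\<gamma> t)) \<and>
    (\<exists>K. finite K \<and> {u, v} \<subseteq> K \<and> K \<subseteq> {u..v} \<and>
      (\<forall>a b. consecutive_in K a b \<longrightarrow> (\<exists>D'. H_C1_on r \<gamma> D' a b \<and> (\<forall>t\<in>{a<..<b}. D t = D' t))))"

lemma pw_C1_path_iff: "pw_C1_path r \<gamma> D \<longleftrightarrow> pw_C1_path_on r 0 1 \<gamma> D"
  unfolding pw_C1_path_def pw_C1_path_on_def H_C1_on_def consecutive_in_def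
  by (simp add: Ball_def imp_conjL)

lemma pw_C1_path_onE:
  assumes "pw_C1_path_on r u v \<gamma> D"
  obtains K where "finite K" "{u, v} \<subseteq> K" "K \<subseteq> {u..v}"
    and "\<And>a b. consecutive_in K a b \<Longrightarrow> \<exists>D'. H_C1_on r \<gamma> D' a b \<and> (\<forall>t\<in>{a<..<b}. D t = D' t)"
  using assms unfolding pw_C1_path_on_def by blast

lemma pw_C1_path_on_Imm: "pw_C1_path_on r u v \<gamma> D \<Longrightarrow> t \<in> {u..v} \<Longrightarrow> Imm r (\<gamma> t)"
  unfolding pw_C1_path_on_def by blast

lemma trunc_inner_increment_le_integral:
  assumes "a < b" and C1: "H_C1_on r \<gamma> D a b" and H: "\<forall>t\<in>{a..b}. in_H r (\<gamma> t)"
    and bound: "\<forall>t\<in>{a<..<b}. Hr_norm r (D t) \<le> g t" and g: "g integrable_on {a..b}"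
    and "finite F"
  shows "trunc_inner r F v (\<gamma> b) - trunc_inner r F v (\<gamma> a)
    \<le> integral {a..b} (\<lambda>t. trunc_norm r F v * g t)"
proof -
  let ?p = "\<lambda>t. trunc_inner r F v (D t)"
  let ?g = "\<lambda>t. trunc_norm r F v * g t"
  have pg: "?p t \<le> ?g t" if "t \<in> {a<..<b}" for t
  proof -
    have "?p t \<le> trunc_norm r F v * trunc_norm r F (D t)"
      using trunc_inner_Cauchy_Schwarz abs_le_D1 by blast
    also have "\<dots> \<le> trunc_norm r F v * Hr_norm r (D t)"
      using C1 that \<open>finite F\<close> unfolding H_C1_on_def
      by (intro mult_left_mono trunc_norm_le_Hr_norm in_H_imp_sobolev_summable trunc_norm_nonneg)
         auto
    also have "\<dots> \<le> ?g t"
      using bound that by (intro mult_left_mono trunc_norm_nonneg) auto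
    finally show ?thesis .
  qed
  have "(?p has_integral trunc_inner r F v (\<gamma> b) - trunc_inner r F v (\<gamma> a)) {a..b}"
  proof (rule fundamental_theorem_of_calculus)
    fix t assume "t \<in> {a..b}"
    with C1 H \<open>finite F\<close> show "((\<lambda>s. trunc_inner r F v (\<gamma> s)) has_vector_derivative ?p t)
        (at t within {a..b})"
      unfolding H_C1_on_def has_real_derivative_iff_has_vector_derivative[symmetric]
      by (intro trunc_inner_has_real_derivative) auto
  qed (use \<open>a < b\<close> in simp)
  then have "((\<lambda>t. if t \<in> {a<..<b} then ?p t else ?g t)
      has_integral trunc_inner r F v (\<gamma> b) - trunc_inner r F v (\<gamma> a)) {a..b}"
    by (rule has_integral_spike_finite[of "{a, b}", rotated 2]) auto
  moreover have "(?g has_integral integral {a..b} ?g) {a..b}"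
    using g by (intro integrable_integral integrable_on_mult_right)
  ultimately show ?thesis
    by (rule has_integral_le) (use pg in auto)
qed

lemma telescoping_le_integral:
  fixes \<phi> g :: "real \<Rightarrow> real"
  assumes K: "finite K" "{u, v} \<subseteq> K" "K \<subseteq> {u..v}" and g: "g integrable_on {u..v}"
    and step: "\<And>a b. consecutive_in K a b \<Longrightarrow> \<phi> b - \<phi> a \<le> integral {a..b} g"
  shows "\<phi> v - \<phi> u \<le> integral {u..v} g"
proof -
  have "\<phi> x - \<phi> u \<le> integral {u..x} g" if "x \<in> K" for x
    using that
  proof (induction "card {k\<in>K. k < x}" arbitrary: x rule: less_induct)
    case less
    show ?case
    proof (cases "x = u")
      case False
      let ?L = "{k\<in>K. k < x}"
      have "u \<in> ?L" using False less.prems K by auto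
      define a where "a = Max ?L"
      have "a \<in> ?L" unfolding a_def using \<open>u \<in> ?L\<close> K by (intro Max_in) auto
      have "k \<le> a" if "k \<in> ?L" for k unfolding a_def using that K by simp
      then have "consecutive_in K a x"
        unfolding consecutive_in_def using \<open>a \<in> ?L\<close> less.prems by force
      have "{k\<in>K. k < a} \<subset> ?L" using \<open>a \<in> ?L\<close> by auto
      then have "card {k\<in>K. k < a} < card ?L" using K by (intro psubset_card_mono) auto
      then have "\<phi> a - \<phi> u \<le> integral {u..a} g" using less.hyps \<open>a \<in> ?L\<close> by blast
      moreover have "\<phi> x - \<phi> a \<le> integral {a..x} g" by (rule step) fact
      moreover have "u \<le> a" "x \<le> v" using \<open>a \<in> ?L\<close> less.prems K by auto
      then have "integral {u..a} g + integral {a..x} g = integral {u..x} g"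
        using \<open>a \<in> ?L\<close> by (intro Henstock_Kurzweil_Integration.integral_combine
            integrable_subinterval_real[OF g]) auto
      ultimately show ?thesis by linarith
    qed simp
  qed
  then show ?thesis using K by simp
qed

definition admissible_path ::
    "real \<Rightarrow> (real \<Rightarrow> real \<Rightarrow> 'a::euclidean_space) \<Rightarrow> (real \<Rightarrow> real \<Rightarrow> 'a) \<Rightarrow> bool" where
  "admissible_path r \<gamma> D \<longleftrightarrow>
     pw_C1_path r \<gamma> D \<and> (\<lambda>t. G_norm r (\<gamma> t) (D t)) integrable_on {0..1}"

lemma G_norm_nonneg: "0 \<le> G_norm r c h"
proof -
  have "0 \<le> integral {0..1} (\<lambda>\<theta>. (norm (h \<theta>))\<^sup>2 * norm (vector_derivative c (at \<theta>)))"
    by (cases "(\<lambda>\<theta>. (norm (h \<theta>))\<^sup>2 * norm (vector_derivative c (at \<theta>))) integrable_on {0..1}")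
       (auto intro: integral_nonneg simp: not_integrable_integral)
  moreover have "0 \<le> Hdot_sq r f" for f :: "real \<Rightarrow> 'a"
    unfolding Hdot_sq_def by (intro infsum_nonneg mult_nonneg_nonneg fc_sq_nonneg) simp
  ultimately show ?thesis
    unfolding G_norm_def G_sq_def by simp
qed

lemma path_len_nonneg: "admissible_path r \<gamma> D \<Longrightarrow> 0 \<le> path_len r \<gamma> D"
  unfolding admissible_path_def path_len_def by (intro integral_nonneg G_norm_nonneg) auto

lemma admissible_path_in_H: "admissible_path r \<gamma> D \<Longrightarrow> t \<in> {0..1} \<Longrightarrow> in_H r (\<gamma> t)"
  unfolding admissible_path_def pw_C1_path_iff by (blast intro: Imm_imp_in_H pw_C1_path_on_Imm)

lemma trunc_inner_increment_le_path_len: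
  assumes path: "admissible_path r \<gamma> D"
    and equiv: "\<And>t h. t \<in> {0..1} \<Longrightarrow> in_H r h \<Longrightarrow> Hr_norm r h \<le> \<alpha> * G_norm r (\<gamma> t) h"
    and "finite F"
  shows "trunc_inner r F v (\<gamma> 1) - trunc_inner r F v (\<gamma> 0)
    \<le> trunc_norm r F v * (\<alpha> * path_len r \<gamma> D)"
proof -
  let ?G = "\<lambda>t. \<alpha> * G_norm r (\<gamma> t) (D t)"
  have pw: "pw_C1_path_on r 0 1 \<gamma> D" and int: "(\<lambda>t. G_norm r (\<gamma> t) (D t)) integrable_on {0..1}"
    using path unfolding admissible_path_def pw_C1_path_iff by auto
  obtain K where K: "finite K" "{0, 1} \<subseteq> K" "K \<subseteq> {0..1}"
    and pieces: "\<And>a b. consecutive_in K a b \<Longrightarrow>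
      \<exists>D'. H_C1_on r \<gamma> D' a b \<and> (\<forall>t\<in>{a<..<b}. D t = D' t)"
    using pw_C1_path_onE[OF pw] by blast
  have "trunc_inner r F v (\<gamma> 1) - trunc_inner r F v (\<gamma> 0)
      \<le> integral {0..1} (\<lambda>t. trunc_norm r F v * ?G t)"
  proof (rule telescoping_le_integral[OF K])
    show "(\<lambda>t. trunc_norm r F v * ?G t) integrable_on {0..1}"
      using int by (intro integrable_on_mult_right)
    fix a b assume ab: "consecutive_in K a b"
    then have sub: "{a..b} \<subseteq> {0..1}" using K unfolding consecutive_in_def by auto
    obtain D' where D': "H_C1_on r \<gamma> D' a b" and DD': "\<forall>t\<in>{a<..<b}. D t = D' t"
      using pieces[OF ab] by blast
    show "trunc_inner r F v (\<gamma> b) - trunc_inner r F v (\<gamma> a)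
        \<le> integral {a..b} (\<lambda>t. trunc_norm r F v * ?G t)"
    proof (rule trunc_inner_increment_le_integral[OF _ D' _ _ _ \<open>finite F\<close>])
      show "a < b" using ab unfolding consecutive_in_def by simp
      show "\<forall>t\<in>{a..b}. in_H r (\<gamma> t)" using sub by (auto intro: admissible_path_in_H[OF path])
      show "\<forall>t\<in>{a<..<b}. Hr_norm r (D' t) \<le> ?G t"
      proof
        fix t assume t: "t \<in> {a<..<b}"
        then have "in_H r (D' t)" using D' unfolding H_C1_on_def by auto
        then have "Hr_norm r (D' t) \<le> \<alpha> * G_norm r (\<gamma> t) (D' t)"
          using t sub by (intro equiv) auto
        then show "Hr_norm r (D' t) \<le> ?G t" using DD' t by simp
      qed
      show "?G integrable_on {a..b}"
        by (intro integrable_on_mult_right integrable_subinterval_real[OF int sub])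
    qed
  qed
  also have "\<dots> = trunc_norm r F v * (\<alpha> * path_len r \<gamma> D)"
    unfolding path_len_def by (simp add: mult.assoc)
  finally show ?thesis .
qed

lemma trunc_norm_increment_le_path_len:
  assumes path: "admissible_path r \<gamma> D"
    and equiv: "\<And>t h. t \<in> {0..1} \<Longrightarrow> in_H r h \<Longrightarrow> Hr_norm r h \<le> \<alpha> * G_norm r (\<gamma> t) h"
    and "0 \<le> \<alpha>" "finite F"
  shows "trunc_norm r F (\<lambda>\<theta>. \<gamma> 1 \<theta> - \<gamma> 0 \<theta>) \<le> \<alpha> * path_len r \<gamma> D"
proof -
  define v where "v = (\<lambda>\<theta>. \<gamma> 1 \<theta> - \<gamma> 0 \<theta>)"
  have "trunc_norm r F v * trunc_norm r F v = trunc_inner r F v (\<gamma> 1) - trunc_inner r F v (\<gamma> 0)"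
    unfolding v_def trunc_inner_self[symmetric, unfolded power2_eq_square]
    using in_H_imp_absolutely_integrable[OF admissible_path_in_H[OF path]]
    by (intro trunc_inner_diff) auto
  also have "\<dots> \<le> trunc_norm r F v * (\<alpha> * path_len r \<gamma> D)"
    using trunc_inner_increment_le_path_len[OF path equiv \<open>finite F\<close>] .
  finally show ?thesis
    unfolding v_def[symmetric] using trunc_norm_nonneg[of r F v] path_len_nonneg[OF path] \<open>0 \<le> \<alpha>\<close>
    by (cases "trunc_norm r F v = 0") simp_all
qed

lemma Hr_norm_increment_le_path_len:
  assumes path: "admissible_path r \<gamma> D"
    and equiv: "\<And>t h. t \<in> {0..1} \<Longrightarrow> in_H r h \<Longrightarrow> Hr_norm r h \<le> \<alpha> * G_norm r (\<gamma> t) h"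
    and "0 \<le> \<alpha>"
  shows "Hr_norm r (\<lambda>\<theta>. \<gamma> 1 \<theta> - \<gamma> 0 \<theta>) \<le> \<alpha> * path_len r \<gamma> D"
proof (rule Hr_norm_le_if_trunc_norm_le)
  have "in_H r (\<gamma> 1)" "in_H r (\<gamma> 0)"
    using admissible_path_in_H[OF path] by auto
  then show "sobolev_summable r (\<lambda>\<theta>. \<gamma> 1 \<theta> - \<gamma> 0 \<theta>)"
    by (intro sobolev_summable_diff in_H_imp_absolutely_integrable in_H_imp_sobolev_summable)
  show "0 \<le> \<alpha> * path_len r \<gamma> D"
    using \<open>0 \<le> \<alpha>\<close> path_len_nonneg[OF path] by simp
qed (rule trunc_norm_increment_le_path_len[OF assms])

subsection \<open>Reparametrizing and joining paths\<close>

lemma H_C1_on_cong: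
  assumes "H_C1_on r \<gamma> D a b" and "\<And>s. s \<in> {a..b} \<Longrightarrow> \<gamma>' s = \<gamma> s"
  shows "H_C1_on r \<gamma>' D a b"
proof -
  have "H_has_deriv r \<gamma>' (D t) t {a..b}" if "t \<in> {a..b}" "H_has_deriv r \<gamma> (D t) t {a..b}" for t
    unfolding H_has_deriv_def
    by (rule Lim_transform_eventually[OF that(2)[unfolded H_has_deriv_def]])
       (use assms(2) that(1) in \<open>auto simp: eventually_at_filter\<close>)
  then show ?thesis
    using assms(1) unfolding H_C1_on_def by blast
qed

lemma tendsto_zero_compose_affine:
  fixes g :: "real \<Rightarrow> real"
  assumes "(g \<longlongrightarrow> 0) (at (p + m * t) within T)" and "m > 0"
    and "\<And>y. y \<in> S \<Longrightarrow> p + m * y \<in> T"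
  shows "((\<lambda>y. g (p + m * y)) \<longlongrightarrow> 0) (at t within S)"
proof (rule filterlim_compose[OF assms(1)])
  show "filterlim (\<lambda>y. p + m * y) (at (p + m * t) within T) (at t within S)"
    unfolding filterlim_at using assms(2,3)
    by (auto simp: eventually_at_filter intro!: always_eventually tendsto_intros)
qed

lemma H_has_deriv_affine:
  assumes "H_has_deriv r \<gamma> D (p + m * s) T" "m > 0" "\<And>y. y \<in> S \<Longrightarrow> p + m * y \<in> T"
  shows "H_has_deriv r (\<lambda>s. \<gamma> (p + m * s)) (\<lambda>\<theta>. m *\<^sub>R D \<theta>) s S"
proof -
  let ?g = "\<lambda>x. Hr_norm r (\<lambda>\<theta>. (1 / (x - (p + m * s))) *\<^sub>R (\<gamma> x \<theta> - \<gamma> (p + m * s) \<theta>) - D \<theta>)"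
  have "((\<lambda>x. m * ?g (p + m * x)) \<longlongrightarrow> 0) (at s within S)"
    using assms(1) unfolding H_has_deriv_def
    by (intro tendsto_mult_right_zero tendsto_zero_compose_affine[OF _ \<open>m > 0\<close> assms(3)])
  moreover have "Hr_norm r (\<lambda>\<theta>. (1 / (x - s)) *\<^sub>R (\<gamma> (p + m * x) \<theta> - \<gamma> (p + m * s) \<theta>) - m *\<^sub>R D \<theta>)
      = m * ?g (p + m * x)" for x
  proof -
    have "m * (1 / (p + m * x - (p + m * s))) = 1 / (x - s)"
      using \<open>m > 0\<close> by (simp add: right_diff_distrib[symmetric])
    then have "(\<lambda>\<theta>. (1 / (x - s)) *\<^sub>R (\<gamma> (p + m * x) \<theta> - \<gamma> (p + m * s) \<theta>) - m *\<^sub>R D \<theta>)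
        = (\<lambda>\<theta>. m *\<^sub>R ((1 / (p + m * x - (p + m * s))) *\<^sub>R (\<gamma> (p + m * x) \<theta> - \<gamma> (p + m * s) \<theta>)
          - D \<theta>))"
      by (simp add: scaleR_diff_right)
    then show ?thesis using \<open>m > 0\<close> by (simp add: Hr_norm_scale)
  qed
  ultimately show ?thesis
    unfolding H_has_deriv_def by simp
qed

lemma H_continuous_on_affine:
  assumes "H_continuous_on r T D" "m > 0" "\<And>y. y \<in> S \<Longrightarrow> p + m * y \<in> T"
  shows "H_continuous_on r S (\<lambda>s \<theta>. m *\<^sub>R D (p + m * s) \<theta>)"
  unfolding H_continuous_on_def
proof
  fix s assume "s \<in> S"
  let ?g = "\<lambda>x. Hr_norm r (\<lambda>\<theta>. D x \<theta> - D (p + m * s) \<theta>)"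
  have "((\<lambda>x. m * ?g (p + m * x)) \<longlongrightarrow> 0) (at s within S)"
    using assms(1) assms(3)[OF \<open>s \<in> S\<close>] unfolding H_continuous_on_def
    by (intro tendsto_mult_right_zero tendsto_zero_compose_affine[OF _ \<open>m > 0\<close> assms(3)]) blast
  moreover have "Hr_norm r (\<lambda>\<theta>. m *\<^sub>R D (p + m * x) \<theta> - m *\<^sub>R D (p + m * s) \<theta>) = m * ?g (p + m * x)"
    for x
    using \<open>m > 0\<close> Hr_norm_scale[of r m "\<lambda>\<theta>. D (p + m * x) \<theta> - D (p + m * s) \<theta>"]
    by (simp add: scaleR_diff_right)
  ultimately show "((\<lambda>x. Hr_norm r (\<lambda>\<theta>. m *\<^sub>R D (p + m * x) \<theta> - m *\<^sub>R D (p + m * s) \<theta>))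
      \<longlongrightarrow> 0) (at s within S)"
    by simp
qed

lemma H_C1_on_affine:
  assumes C1: "H_C1_on r \<gamma> D a0 b0" and "m > 0"
    and into: "\<And>s. s \<in> {a..b} \<Longrightarrow> p + m * s \<in> {a0..b0}"
  shows "H_C1_on r (\<lambda>s. \<gamma> (p + m * s)) (\<lambda>s \<theta>. m *\<^sub>R D (p + m * s) \<theta>) a b"
  unfolding H_C1_on_def
proof (intro conjI ballI)
  fix s assume s: "s \<in> {a..b}"
  show "in_H r (\<lambda>\<theta>. m *\<^sub>R D (p + m * s) \<theta>)"
    using C1 into[OF s] unfolding H_C1_on_def by (intro in_H_scale) auto
  show "H_has_deriv r (\<lambda>s. \<gamma> (p + m * s)) (\<lambda>\<theta>. m *\<^sub>R D (p + m * s) \<theta>) s {a..b}"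
    using C1 into[OF s] unfolding H_C1_on_def by (intro H_has_deriv_affine[OF _ \<open>m > 0\<close> into]) auto
next
  show "H_continuous_on r {a..b} (\<lambda>s \<theta>. m *\<^sub>R D (p + m * s) \<theta>)"
    using C1 unfolding H_C1_on_def by (intro H_continuous_on_affine[OF _ \<open>m > 0\<close> into]) auto
qed

lemma consecutive_in_enclosing:
  assumes "finite K" "u \<in> K" "v \<in> K" "u \<le> A" "A < B" "B \<le> v" "{A<..<B} \<inter> K = {}"
  obtains a b where "consecutive_in K a b" "a \<le> A" "B \<le> b"
proof -
  let ?L = "{k\<in>K. k \<le> A}" and ?R = "{k\<in>K. B \<le> k}"
  define a where "a = Max ?L"
  define b where "b = Min ?R"
  have "a \<in> ?L" unfolding a_def using assms(1,2,4) by (intro Max_in) auto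
  have "b \<in> ?R" unfolding b_def using assms(1,3,6) by (intro Min_in) auto
  have "k \<le> a" if "k \<in> ?L" for k
    unfolding a_def using that assms(1) by (intro Max_ge) auto
  moreover have "b \<le> k" if "k \<in> ?R" for k
    unfolding b_def using that assms(1) by (intro Min_le) auto
  ultimately have "k \<notin> K" if "a < k" "k < b" for k
    using that assms(7) by force
  then have "consecutive_in K a b"
    unfolding consecutive_in_def using \<open>a \<in> ?L\<close> \<open>b \<in> ?R\<close> assms(5) by auto
  then show ?thesis using that \<open>a \<in> ?L\<close> \<open>b \<in> ?R\<close> by blast
qed

lemma consecutive_in_affine_preimage:
  assumes "finite K" "u \<in> K" "v \<in> K" "m > 0" "u' \<le> v'" "u \<le> p + m * u'" "p + m * v' \<le> v"
    and ab: "consecutive_in ({u', v'} \<union> {s\<in>{u'..v'}. p + m * s \<in> K}) a b"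
  obtains a0 b0 where "consecutive_in K a0 b0" "a0 \<le> p + m * a" "p + m * b \<le> b0"
proof (rule consecutive_in_enclosing[OF assms(1-3)])
  have ab': "a \<in> {u'..v'}" "b \<in> {u'..v'}" "a < b"
    using ab \<open>u' \<le> v'\<close> unfolding consecutive_in_def by auto
  have mono: "p + m * x \<le> p + m * y \<longleftrightarrow> x \<le> y" "p + m * x < p + m * y \<longleftrightarrow> x < y" for x y
    using \<open>m > 0\<close> by simp_all
  show "u \<le> p + m * a" "p + m * a < p + m * b" "p + m * b \<le> v"
    using ab' assms(6,7) mono(1)[of u' a] mono(1)[of b v'] mono(2)[of a b] by auto
  show "{p + m * a<..<p + m * b} \<inter> K = {}"
  proof (rule ccontr)
    assume "{p + m * a<..<p + m * b} \<inter> K \<noteq> {}"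
    then obtain k where k: "k \<in> K" "p + m * a < k" "k < p + m * b" by auto
    define x where "x = (k - p) / m"
    have "p + m * x = k" unfolding x_def using \<open>m > 0\<close> by simp
    then have "x \<in> {a<..<b}" using k mono(2)[of a x] mono(2)[of x b] by auto
    with ab' \<open>p + m * x = k\<close> k(1) show False
      using ab unfolding consecutive_in_def by auto
  qed
qed

lemma pw_C1_path_on_affine:
  assumes path: "pw_C1_path_on r u v \<gamma> D" and "m > 0" "u' < v'"
    and "u \<le> p + m * u'" "p + m * v' \<le> v"
  shows "pw_C1_path_on r u' v' (\<lambda>s. \<gamma> (p + m * s)) (\<lambda>s \<theta>. m *\<^sub>R D (p + m * s) \<theta>)"
proof -
  obtain K where K: "finite K" "{u, v} \<subseteq> K" "K \<subseteq> {u..v}"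
    and pieces: "\<And>a b. consecutive_in K a b \<Longrightarrow>
      \<exists>D'. H_C1_on r \<gamma> D' a b \<and> (\<forall>t\<in>{a<..<b}. D t = D' t)"
    using pw_C1_path_onE[OF path] by blast
  have mono: "p + m * x \<le> p + m * y \<longleftrightarrow> x \<le> y" "p + m * x < p + m * y \<longleftrightarrow> x < y" for x y
    using \<open>m > 0\<close> by simp_all
  have into: "p + m * s \<in> {u..v}" if "s \<in> {u'..v'}" for s
    using that assms(4,5) mono(1)[of u' s] mono(1)[of s v'] by auto
  define K' where "K' = {u', v'} \<union> {s\<in>{u'..v'}. p + m * s \<in> K}"
  have "{s\<in>{u'..v'}. p + m * s \<in> K} \<subseteq> (\<lambda>k. (k - p) / m) ` K"
    using \<open>m > 0\<close> by (auto intro!: image_eqI[where x = "p + m * _"])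
  then have "finite K'" unfolding K'_def using K(1) finite_subset by auto
  moreover have "{u', v'} \<subseteq> K'" "K' \<subseteq> {u'..v'}" unfolding K'_def using \<open>u' < v'\<close> by auto
  moreover have "\<exists>D'. H_C1_on r (\<lambda>s. \<gamma> (p + m * s)) D' a b
      \<and> (\<forall>t\<in>{a<..<b}. (\<lambda>\<theta>. m *\<^sub>R D (p + m * t) \<theta>) = D' t)"
    if ab: "consecutive_in K' a b" for a b
  proof -
    obtain a0 b0 where piece: "consecutive_in K a0 b0" "a0 \<le> p + m * a" "p + m * b \<le> b0"
      using consecutive_in_affine_preimage[OF K(1) _ _ \<open>m > 0\<close> _ assms(4,5) ab[unfolded K'_def]]
        K(2) \<open>u' < v'\<close> by auto
    obtain D0 where D0: "H_C1_on r \<gamma> D0 a0 b0" "\<forall>t\<in>{a0<..<b0}. D t = D0 t"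
      using pieces[OF piece(1)] by blast
    have "p + m * s \<in> {a0..b0}" if "s \<in> {a..b}" for s
      using that piece mono(1)[of a s] mono(1)[of s b] by auto
    moreover have "p + m * s \<in> {a0<..<b0}" if "s \<in> {a<..<b}" for s
      using that piece mono(2)[of a s] mono(2)[of s b] by auto
    ultimately show ?thesis
      using D0 \<open>m > 0\<close>
      by (intro exI[of _ "\<lambda>s \<theta>. m *\<^sub>R D0 (p + m * s) \<theta>"] conjI H_C1_on_affine) auto
  qed
  ultimately show ?thesis
    unfolding pw_C1_path_on_def
    using pw_C1_path_on_Imm[OF path] into by (intro conjI exI[of _ K']) auto
qed

lemma consecutive_in_Un:
  assumes "consecutive_in (K1 \<union> K2) a b" "v \<in> K1" "K1 \<subseteq> {..v}" "v \<in> K2" "K2 \<subseteq> {v..}"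
  shows "consecutive_in K1 a b \<and> b \<le> v \<or> consecutive_in K2 a b \<and> v \<le> a"
proof (cases "b \<le> v")
  case True
  then have "a \<notin> K2 - K1" "b \<notin> K2 - K1" using assms unfolding consecutive_in_def by force+
  then show ?thesis using assms(1) True unfolding consecutive_in_def by auto
next
  case False
  then have "v \<le> a" using assms(1,2) unfolding consecutive_in_def by force
  then have "a \<notin> K1 - K2" "b \<notin> K1 - K2" using False assms unfolding consecutive_in_def by force+
  then show ?thesis using assms(1) \<open>v \<le> a\<close> unfolding consecutive_in_def by auto
qed

lemma pw_C1_path_on_join:
  assumes P1: "pw_C1_path_on r u v \<gamma>1 D1" and P2: "pw_C1_path_on r v w \<gamma>2 D2"
    and "\<gamma>1 v = \<gamma>2 v"
  shows "pw_C1_path_on r u w (\<lambda>s. if s \<le> v then \<gamma>1 s else \<gamma>2 s) (\<lambda>s. if s \<le> v then D1 s else D2 s)"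
proof -
  obtain K1 where K1: "finite K1" "{u, v} \<subseteq> K1" "K1 \<subseteq> {u..v}"
    and pieces1: "\<And>a b. consecutive_in K1 a b \<Longrightarrow>
      \<exists>D'. H_C1_on r \<gamma>1 D' a b \<and> (\<forall>t\<in>{a<..<b}. D1 t = D' t)"
    using pw_C1_path_onE[OF P1] by blast
  obtain K2 where K2: "finite K2" "{v, w} \<subseteq> K2" "K2 \<subseteq> {v..w}"
    and pieces2: "\<And>a b. consecutive_in K2 a b \<Longrightarrow>
      \<exists>D'. H_C1_on r \<gamma>2 D' a b \<and> (\<forall>t\<in>{a<..<b}. D2 t = D' t)"
    using pw_C1_path_onE[OF P2] by blast
  let ?\<gamma> = "\<lambda>s. if s \<le> v then \<gamma>1 s else \<gamma>2 s" and ?D = "\<lambda>s. if s \<le> v then D1 s else D2 s"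
  have "\<exists>D'. H_C1_on r ?\<gamma> D' a b \<and> (\<forall>t\<in>{a<..<b}. ?D t = D' t)"
    if "consecutive_in (K1 \<union> K2) a b" for a b
  proof -
    have "v \<in> K1" "K1 \<subseteq> {..v}" "v \<in> K2" "K2 \<subseteq> {v..}" using K1 K2 by auto
    from consecutive_in_Un[OF that this] show ?thesis
    proof (elim disjE conjE)
      assume "consecutive_in K1 a b" "b \<le> v"
      then obtain D' where D': "H_C1_on r \<gamma>1 D' a b" "\<forall>t\<in>{a<..<b}. D1 t = D' t"
        using pieces1 by blast
      have "H_C1_on r ?\<gamma> D' a b"
        using \<open>b \<le> v\<close> by (intro H_C1_on_cong[OF D'(1)]) auto
      with D'(2) \<open>b \<le> v\<close> show ?thesis by auto
    next
      assume "consecutive_in K2 a b" "v \<le> a"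
      then obtain D' where D': "H_C1_on r \<gamma>2 D' a b" "\<forall>t\<in>{a<..<b}. D2 t = D' t"
        using pieces2 by blast
      have "?\<gamma> s = \<gamma>2 s" if "s \<in> {a..b}" for s
        using that \<open>v \<le> a\<close> \<open>\<gamma>1 v = \<gamma>2 v\<close> by (cases "s = v") auto
      then have "H_C1_on r ?\<gamma> D' a b"
        by (rule H_C1_on_cong[OF D'(1)])
      with D'(2) \<open>v \<le> a\<close> show ?thesis by auto
    qed
  qed
  moreover have "\<forall>t\<in>{u..w}. Imm r (?\<gamma> t)"
    using pw_C1_path_on_Imm[OF P1] pw_C1_path_on_Imm[OF P2] by auto
  moreover have "K1 \<union> K2 \<subseteq> {u..w}"
    using K1 K2 by force
  ultimately show ?thesis
    unfolding pw_C1_path_on_def using K1 K2 by (intro conjI exI[of _ "K1 \<union> K2"]) auto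
qed

lemma pw_C1_path_on_const:
  assumes "Imm r c" "u \<le> v"
  shows "pw_C1_path_on r u v (\<lambda>_. c) (\<lambda>_ _. 0::'a::euclidean_space)"
proof -
  have "H_C1_on r (\<lambda>_. c) (\<lambda>_ _. 0::'a) a b" for a b
    unfolding H_C1_on_def H_has_deriv_def H_continuous_on_def by (simp add: Hr_norm_zero in_H_zero)
  then show ?thesis
    unfolding pw_C1_path_on_def using assms by (intro conjI exI[of _ "{u, v}"]) auto
qed

lemma has_integral_affine_reparam:
  fixes G :: "real \<Rightarrow> real"
  assumes "G integrable_on {p + m * u..p + m * v}" "m > 0" "u \<le> v"
  shows "((\<lambda>s. m * G (p + m * s)) has_integral integral {p + m * u..p + m * v} G) {u..v}"
proof -
  have affine: "(\<lambda>x. (1 / m) *\<^sub>R x + - ((1 / m) *\<^sub>R p)) = (\<lambda>x. (1 / m) * x + - (p / m))"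
    by (auto simp: field_simps)
  have "p + m * u \<le> p + m * v"
    using assms(2,3) by simp
  then have "(\<lambda>x. (1 / m) *\<^sub>R x + - ((1 / m) *\<^sub>R p)) ` cbox (p + m * u) (p + m * v) = {u..v}"
    unfolding affine cbox_interval image_affinity_atLeastAtMost using assms(2)
    by (simp add: field_simps)
  then have "((\<lambda>x. G (m * x + p)) has_integral (1 / m) * integral {p + m * u..p + m * v} G) {u..v}"
    using has_integral_affinity[OF integrable_integral[OF assms(1)[folded cbox_interval]], of m p]
      assms(2) by (simp add: cbox_interval)
  from has_integral_mult_right[OF this, of m] show ?thesis
    using assms(2) by (simp add: add.commute)
qed

lemma has_integral_join:
  fixes f g :: "real \<Rightarrow> real"
  assumes "(f has_integral i) {u..v}" "(g has_integral j) {v..w}" "u \<le> v" "v \<le> w"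
  shows "((\<lambda>s. if s \<le> v then f s else g s) has_integral i + j) {u..w}"
proof (rule has_integral_combine[OF assms(3,4)])
  show "((\<lambda>s. if s \<le> v then f s else g s) has_integral i) {u..v}"
    by (rule has_integral_spike_finite[of "{}", OF _ _ assms(1)]) auto
  show "((\<lambda>s. if s \<le> v then f s else g s) has_integral j) {v..w}"
    by (rule has_integral_spike_finite[of "{v}", OF _ _ assms(2)]) auto
qed

lemma G_norm_scale:
  assumes "m \<ge> 0"
  shows "G_norm r c (\<lambda>\<theta>. m *\<^sub>R h \<theta>) = m * G_norm r c h"
proof -
  have "Hdot_sq r (\<lambda>x. m *\<^sub>R f x) = m\<^sup>2 * Hdot_sq r f" for f :: "real \<Rightarrow> 'a"
    unfolding Hdot_sq_def fc_sq_scale by (simp add: algebra_simps flip: infsum_cmult_right')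
  then have "G_sq r c (\<lambda>\<theta>. m *\<^sub>R h \<theta>) = m\<^sup>2 * G_sq r c h"
    unfolding G_sq_def o_def
    by (simp add: power_mult_distrib algebra_simps flip: integral_mult_right)
  then show ?thesis
    unfolding G_norm_def using assms by (simp add: real_sqrt_mult)
qed

lemma G_norm_zero: "G_norm r c (\<lambda>\<theta>. 0::'a::euclidean_space) = 0"
  unfolding G_norm_def G_sq_def Hdot_sq_def by (simp add: o_def fc_sq_zero)

subsection \<open>Geodesic distance\<close>

lemma distG_le_path_len: "admissible_path r \<gamma> D \<Longrightarrow> distG r (\<gamma> 0) (\<gamma> 1) \<le> ereal (path_len r \<gamma> D)"
  unfolding distG_def admissible_path_def by (rule Inf_lower) blast

lemma distG_lessE:
  assumes "distG r x y < ereal \<rho>"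
  obtains \<gamma> D where "admissible_path r \<gamma> D" "\<gamma> 0 = x" "\<gamma> 1 = y" "path_len r \<gamma> D < \<rho>"
  using assms unfolding distG_def admissible_path_def Inf_less_iff by auto

lemma le_distG:
  assumes "\<And>\<gamma> D. admissible_path r \<gamma> D \<Longrightarrow> \<gamma> 0 = x \<Longrightarrow> \<gamma> 1 = y \<Longrightarrow> B \<le> path_len r \<gamma> D"
  shows "ereal B \<le> distG r x y"
  unfolding distG_def by (rule Inf_greatest) (use assms in \<open>auto simp: admissible_path_def\<close>)

lemma admissible_const_path:
  assumes "Imm r c"
  shows "admissible_path r (\<lambda>_. c) (\<lambda>_ _. 0::'a::euclidean_space)"
    and "path_len r (\<lambda>_. c) (\<lambda>_ _. 0::'a) = 0"
  using pw_C1_path_on_const[OF assms, of 0 1]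
  unfolding admissible_path_def pw_C1_path_iff path_len_def by (simp_all add: G_norm_zero integrable_0)

lemma admissible_path_tail:
  assumes \<gamma>: "admissible_path r \<gamma> D" and "0 \<le> t" "t < 1"
  shows "admissible_path r (\<lambda>s. \<gamma> (t + (1 - t) * s)) (\<lambda>s \<theta>. (1 - t) *\<^sub>R D (t + (1 - t) * s) \<theta>)"
    and "path_len r (\<lambda>s. \<gamma> (t + (1 - t) * s)) (\<lambda>s \<theta>. (1 - t) *\<^sub>R D (t + (1 - t) * s) \<theta>)
      = integral {t..1} (\<lambda>s. G_norm r (\<gamma> s) (D s))"
proof -
  let ?G = "\<lambda>s. G_norm r (\<gamma> s) (D s)"
  have pw: "pw_C1_path_on r 0 1 \<gamma> D" and int: "?G integrable_on {0..1}"
    using \<gamma> unfolding admissible_path_def pw_C1_path_iff by simp_all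
  have "pw_C1_path_on r 0 1 (\<lambda>s. \<gamma> (t + (1 - t) * s)) (\<lambda>s \<theta>. (1 - t) *\<^sub>R D (t + (1 - t) * s) \<theta>)"
    using assms(2,3) by (intro pw_C1_path_on_affine[OF pw]) simp_all
  moreover have "?G integrable_on {t + (1 - t) * 0..t + (1 - t) * 1}"
    using assms(2) by (simp add: integrable_subinterval_real[OF int])
  from has_integral_affine_reparam[OF this] assms(3)
  have "((\<lambda>s. G_norm r (\<gamma> (t + (1 - t) * s)) (\<lambda>\<theta>. (1 - t) *\<^sub>R D (t + (1 - t) * s) \<theta>))
      has_integral integral {t..1} ?G) {0..1}"
    by (simp add: G_norm_scale)
  ultimately show "admissible_path r (\<lambda>s. \<gamma> (t + (1 - t) * s)) (\<lambda>s \<theta>. (1 - t) *\<^sub>R D (t + (1 - t) * s) \<theta>)"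
    and "path_len r (\<lambda>s. \<gamma> (t + (1 - t) * s)) (\<lambda>s \<theta>. (1 - t) *\<^sub>R D (t + (1 - t) * s) \<theta>)
      = integral {t..1} ?G"
    unfolding admissible_path_def pw_C1_path_iff path_len_def
    by (auto intro: has_integral_integrable integral_unique)
qed

lemma admissible_path_join:
  assumes \<gamma>: "admissible_path r \<gamma> D" and \<beta>: "admissible_path r \<beta> E" and "\<gamma> 1 = \<beta> 0"
  obtains \<mu> M where "admissible_path r \<mu> M" "\<mu> 0 = \<gamma> 0" "\<mu> 1 = \<beta> 1"
    "path_len r \<mu> M = path_len r \<gamma> D + path_len r \<beta> E"
proof -
  define \<mu> where "\<mu> s = (if s \<le> 1/2 then \<gamma> (0 + 2 * s) else \<beta> (-1 + 2 * s))" for s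
  define M where "M s = (if s \<le> 1/2 then (\<lambda>\<theta>. 2 *\<^sub>R D (0 + 2 * s) \<theta>)
    else (\<lambda>\<theta>. 2 *\<^sub>R E (-1 + 2 * s) \<theta>))" for s
  have pw: "pw_C1_path_on r 0 1 \<gamma> D" "pw_C1_path_on r 0 1 \<beta> E"
    using \<gamma> \<beta> unfolding admissible_path_def pw_C1_path_iff by simp_all
  have "pw_C1_path_on r 0 (1/2) (\<lambda>s. \<gamma> (0 + 2 * s)) (\<lambda>s \<theta>. 2 *\<^sub>R D (0 + 2 * s) \<theta>)"
    and "pw_C1_path_on r (1/2) 1 (\<lambda>s. \<beta> (-1 + 2 * s)) (\<lambda>s \<theta>. 2 *\<^sub>R E (-1 + 2 * s) \<theta>)"
    by (intro pw_C1_path_on_affine[OF pw(1)] pw_C1_path_on_affine[OF pw(2)]; simp)+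
  then have "pw_C1_path r \<mu> M"
    unfolding pw_C1_path_iff \<mu>_def[abs_def] M_def[abs_def]
    by (rule pw_C1_path_on_join) (simp add: \<open>\<gamma> 1 = \<beta> 0\<close>)
  have "((\<lambda>s. 2 * G_norm r (\<gamma> (0 + 2 * s)) (D (0 + 2 * s))) has_integral path_len r \<gamma> D) {0..1/2}"
    and "((\<lambda>s. 2 * G_norm r (\<beta> (-1 + 2 * s)) (E (-1 + 2 * s))) has_integral path_len r \<beta> E) {1/2..1}"
    using has_integral_affine_reparam[of "\<lambda>s. G_norm r (\<gamma> s) (D s)" 0 2 0 "1/2"]
      has_integral_affine_reparam[of "\<lambda>s. G_norm r (\<beta> s) (E s)" "-1" 2 "1/2" 1] \<gamma> \<beta>
    unfolding admissible_path_def path_len_def by simp_all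
  from has_integral_join[OF this]
  have len: "((\<lambda>s. G_norm r (\<mu> s) (M s)) has_integral path_len r \<gamma> D + path_len r \<beta> E) {0..1}"
    unfolding \<mu>_def M_def by (simp add: if_distrib G_norm_scale cong: if_cong)
  show ?thesis
  proof (rule that)
    show "admissible_path r \<mu> M"
      unfolding admissible_path_def using \<open>pw_C1_path r \<mu> M\<close> len by (blast intro: has_integral_integrable)
    show "path_len r \<mu> M = path_len r \<gamma> D + path_len r \<beta> E"
      unfolding path_len_def[of r \<mu>] by (rule integral_unique[OF len])
  qed (simp_all add: \<mu>_def \<open>\<gamma> 1 = \<beta> 0\<close>)
qed

lemma distG_path_point_le:
  assumes \<gamma>: "admissible_path r \<gamma> D" and \<beta>: "admissible_path r \<beta> E"
    and "\<gamma> 1 = \<beta> 0" "t \<in> {0..1}"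
  shows "distG r (\<gamma> t) (\<beta> 1) \<le> ereal (path_len r \<gamma> D + path_len r \<beta> E)"
proof (cases "t = 1")
  case True
  then show ?thesis
    using distG_le_path_len[OF \<beta>] path_len_nonneg[OF \<gamma>] \<open>\<gamma> 1 = \<beta> 0\<close> by (simp add: order_trans)
next
  case False
  let ?G = "\<lambda>s. G_norm r (\<gamma> s) (D s)"
  have "0 \<le> t" "t < 1" using False \<open>t \<in> {0..1}\<close> by auto
  note tail = admissible_path_tail[OF \<gamma> this]
  obtain \<mu> M where \<mu>: "admissible_path r \<mu> M" "\<mu> 0 = \<gamma> t" "\<mu> 1 = \<beta> 1"
    and len: "path_len r \<mu> M = integral {t..1} ?G + path_len r \<beta> E"
    by (rule admissible_path_join[OF tail(1) \<beta>]) (use \<open>\<gamma> 1 = \<beta> 0\<close> tail(2) in simp_all)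
  have int: "?G integrable_on {0..1}"
    using \<gamma> unfolding admissible_path_def by blast
  have "integral {0..t} ?G + integral {t..1} ?G = path_len r \<gamma> D"
    unfolding path_len_def using \<open>t \<in> {0..1}\<close> int
    by (intro Henstock_Kurzweil_Integration.integral_combine) auto
  moreover have "0 \<le> integral {0..t} ?G"
    using \<open>t \<in> {0..1}\<close> by (intro integral_nonneg integrable_subinterval_real[OF int] G_norm_nonneg) auto
  ultimately have "path_len r \<mu> M \<le> path_len r \<gamma> D + path_len r \<beta> E"
    unfolding len by linarith
  then show ?thesis
    using distG_le_path_len[OF \<mu>(1)] \<mu>(2,3) by (simp add: order_trans)
qed

lemma path_in_ballG:
  assumes \<gamma>: "admissible_path r \<gamma> D" and \<beta>: "admissible_path r \<beta> E"
    and "\<gamma> 1 = \<beta> 0" "\<beta> 1 = c0" "path_len r \<gamma> D + path_len r \<beta> E < R" "t \<in> {0..1}"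
  shows "\<gamma> t \<in> ballG r c0 R"
proof -
  have "Imm r (\<gamma> t)"
    using \<gamma> \<open>t \<in> {0..1}\<close> unfolding admissible_path_def pw_C1_path_iff
    by (blast intro: pw_C1_path_on_Imm)
  moreover have "distG r (\<gamma> t) c0 < ereal R"
    using distG_path_point_le[OF \<gamma> \<beta> \<open>\<gamma> 1 = \<beta> 0\<close> \<open>t \<in> {0..1}\<close>] assms(4,5)
    by (simp add: le_less_trans)
  ultimately show ?thesis
    unfolding ballG_def by simp
qed

lemma Hr_norm_le_mult_distG:
  assumes "\<alpha> > 0"
    and bound: "\<And>\<gamma> D. admissible_path r \<gamma> D \<Longrightarrow> \<gamma> 0 = x \<Longrightarrow> \<gamma> 1 = y \<Longrightarrow>
      Hr_norm r (\<lambda>\<theta>. y \<theta> - x \<theta>) \<le> \<alpha> * path_len r \<gamma> D"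
  shows "ereal (Hr_norm r (\<lambda>\<theta>. y \<theta> - x \<theta>)) \<le> ereal \<alpha> * distG r x y"
proof -
  have "ereal (Hr_norm r (\<lambda>\<theta>. y \<theta> - x \<theta>) / \<alpha>) \<le> distG r x y"
    using bound \<open>\<alpha> > 0\<close> by (intro le_distG) (simp add: divide_le_eq mult.commute)
  then have "ereal \<alpha> * ereal (Hr_norm r (\<lambda>\<theta>. y \<theta> - x \<theta>) / \<alpha>) \<le> ereal \<alpha> * distG r x y"
    using \<open>\<alpha> > 0\<close> by (intro ereal_mult_left_mono) auto
  then show ?thesis using \<open>\<alpha> > 0\<close> by simp
qed

lemma Hr_norm_le_path_len_between_ballG_points:
  assumes equiv: "\<And>c h. c \<in> ballG r c0 (4 * \<rho>) \<Longrightarrow> in_H r h \<Longrightarrow> Hr_norm r h \<le> \<alpha> * G_norm r c h"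
    and "\<alpha> > 0" "\<rho> > 0" "Imm r c0"
    and \<beta>1: "admissible_path r \<beta>1 E1" "\<beta>1 0 = c1" "\<beta>1 1 = c0" "path_len r \<beta>1 E1 < \<rho>"
    and \<beta>2: "admissible_path r \<beta>2 E2" "\<beta>2 0 = c2" "\<beta>2 1 = c0" "path_len r \<beta>2 E2 < \<rho>"
    and \<gamma>: "admissible_path r \<gamma> D" "\<gamma> 0 = c1" "\<gamma> 1 = c2"
  shows "Hr_norm r (\<lambda>\<theta>. c2 \<theta> - c1 \<theta>) \<le> \<alpha> * path_len r \<gamma> D"
proof -
  have along: "Hr_norm r (\<lambda>\<theta>. \<mu> 1 \<theta> - \<mu> 0 \<theta>) \<le> \<alpha> * path_len r \<mu> M"
    if "admissible_path r \<mu> M" "admissible_path r \<nu> N" "\<mu> 1 = \<nu> 0" "\<nu> 1 = c0"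
      "path_len r \<mu> M + path_len r \<nu> N < 4 * \<rho>" for \<mu> M \<nu> N
    using that \<open>\<alpha> > 0\<close>
    by (intro Hr_norm_increment_le_path_len equiv path_in_ballG[of r \<mu> M \<nu> N]) auto
  note c0 = admissible_const_path[OF \<open>Imm r c0\<close>]
  show ?thesis
  proof (cases "path_len r \<gamma> D < 3 * \<rho>")
    case True
    then show ?thesis
      using along[OF \<gamma>(1) \<beta>2(1)] \<gamma> \<beta>2 by simp
  next
    case False
    have H: "in_H r c" if "c \<in> {c0, c1, c2}" for c
      using that Imm_imp_in_H[OF \<open>Imm r c0\<close>] \<beta>1(2) \<beta>2(2)
        admissible_path_in_H[OF \<beta>1(1), of 0] admissible_path_in_H[OF \<beta>2(1), of 0] by auto
    have "Hr_norm r (\<lambda>\<theta>. c2 \<theta> - c1 \<theta>)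
        \<le> Hr_norm r (\<lambda>\<theta>. c2 \<theta> - c0 \<theta>) + Hr_norm r (\<lambda>\<theta>. c0 \<theta> - c1 \<theta>)"
      using H by (intro Hr_norm_diff_triangle) auto
    also have "\<dots> = Hr_norm r (\<lambda>\<theta>. \<beta>2 1 \<theta> - \<beta>2 0 \<theta>) + Hr_norm r (\<lambda>\<theta>. \<beta>1 1 \<theta> - \<beta>1 0 \<theta>)"
      using \<beta>1 \<beta>2 Hr_norm_diff_commute by metis
    also have "\<dots> \<le> \<alpha> * path_len r \<beta>2 E2 + \<alpha> * path_len r \<beta>1 E1"
      using \<beta>1 \<beta>2 \<open>\<rho> > 0\<close>
      by (intro add_mono along[OF _ c0(1)]) (simp_all add: c0(2))
    also have "\<dots> \<le> \<alpha> * path_len r \<gamma> D"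
      using False \<beta>1(4) \<beta>2(4) \<open>\<alpha> > 0\<close> \<open>\<rho> > 0\<close> by (simp flip: distrib_left)
    finally show ?thesis .
  qed
qed

theorem lemma4p8:
  fixes c0 c1 c2 :: "real \<Rightarrow> 'a::euclidean_space"
    and r \<rho> \<alpha> :: real
  assumes "r > 3/2"
    and "Imm r c0"
    and "\<rho> > 0"
    and "\<alpha> > 0"
    and "\<forall>c\<in>ballG r c0 (4 * \<rho>). \<forall>h. in_H r h \<longrightarrow>
           (1 / \<alpha>) * Hr_norm r h \<le> G_norm r c h \<and> G_norm r c h \<le> \<alpha> * Hr_norm r h"
    and "c1 \<in> ballG r c0 \<rho>"
    and "c2 \<in> ballG r c0 \<rho>"
  shows "ereal (Hr_norm r (\<lambda>\<theta>. c2 \<theta> - c1 \<theta>)) \<le> ereal \<alpha> * distG r c1 c2"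
proof -
  \<comment> \<open>\<open>r > 3/2\<close> is what makes such an \<open>\<alpha>\<close> exist.\<close>
  have equiv: "Hr_norm r h \<le> \<alpha> * G_norm r c h" if "c \<in> ballG r c0 (4 * \<rho>)" "in_H r h" for c h
    using assms(5) that \<open>\<alpha> > 0\<close> by (simp add: field_simps)
  obtain \<beta>1 E1 where \<beta>1: "admissible_path r \<beta>1 E1" "\<beta>1 0 = c1" "\<beta>1 1 = c0" "path_len r \<beta>1 E1 < \<rho>"
    using assms(6) unfolding ballG_def by (blast elim: distG_lessE)
  obtain \<beta>2 E2 where \<beta>2: "admissible_path r \<beta>2 E2" "\<beta>2 0 = c2" "\<beta>2 1 = c0" "path_len r \<beta>2 E2 < \<rho>"
    using assms(7) unfolding ballG_def by (blast elim: distG_lessE)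
  show ?thesis
    using Hr_norm_le_path_len_between_ballG_points[OF equiv \<open>\<alpha> > 0\<close> \<open>\<rho> > 0\<close> \<open>Imm r c0\<close> \<beta>1 \<beta>2]
    by (rule Hr_norm_le_mult_distG[OF \<open>\<alpha> > 0\<close>])
qed

end
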